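(* Let $n\ge1$ and let $\mathcal{D}_{S_1},\mathcal{D}_{S_2}\subseteq\mathcal{D}_{[n]}\setminus\{n\}$ be such that $\mathrm{ICG}(n,\mathcal{D}_{S_1})$ and $\mathrm{ICG}(n,\mathcal{D}_{S_2})$ are isospectral. Let $\mathcal{D}_R\subseteq\mathcal{D}_{[n]}$ be such that $\lambda_d(S_1)=\lambda_d(S_2)$ for all $d\in\mathcal{D}_R$. Let $\mathcal{D}_T\subseteq\mathcal{D}_{[n]}\setminus\mathcal{D}_R$ be such that (1) there is $d_0\in\mathcal{D}_T$ with $\lambda_d(S_1)=\lambda_{d_0}(S_1)$ for all $d\in\mathcal{D}_T$, and (2) $\sum_{d\in\mathcal{D}_T}\phi(n/d)>n-\sum_{d\in\mathcal{D}_R}\phi(n/d)-\sum_{d\in\mathcal{D}_T}\phi(n/d)$. Then there exists $d_0'\in\mathcal{D}_T$ with $\lambda_{d_0'}(S_2)=\lambda_{d_0}(S_1)$. In particular, if $\mathcal{D}_T=\{d_0\}$ then $\lambda_{d_0}(S_1)=\lambda_{d_0}(S_2)$.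
   Context: Identify $\mathbb{Z}_n$ with $[n]=\{1,\dots,n\}$. For a divisor $d$ of $n$, $G_n(d)=\{j\in[n]:\gcd(j,n)=d\}$; $\mathcal{D}_{[n]}$ is the set of positive divisors of $n$. For $\mathcal{D}\subseteq\mathcal{D}_{[n]}\setminus\{n\}$, $\mathrm{ICG}(n,\mathcal{D})=\mathrm{Cay}(\mathbb{Z}_n,S)$ with $S=\bigcup_{d\in\mathcal{D}}G_n(d)$, and $\mathcal{D}=\mathcal{D}_S$. For $k\in[n]$, $\lambda_k(S)=\sum_{g\in S}e^{2\pi\iota kg/n}$; the eigenvalues of $\mathrm{Cay}(\mathbb{Z}_n,S)$ with multiplicity are $\lambda_1(S),\dots,\lambda_n(S)$. $\phi$ is Euler's totient function. Isospectral means having the same multiset of adjacency eigenvalues. *)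

theory Defs
  imports "HOL-Analysis.Analysis" "HOL-Number_Theory.Number_Theory" "HOL-Library.Multiset"
begin

text \<open>Z_n identified with [n] = {1..n}.  G_n(d) = {j in [n] : gcd j n = d}.\<close>
definition G :: "nat \<Rightarrow> nat \<Rightarrow> nat set" where
  "G n d = {j \<in> {1..n}. gcd j n = d}"

definition divisors_of :: "nat \<Rightarrow> nat set" where
  "divisors_of n = {d. d > 0 \<and> d dvd n}"

definition icg_set :: "nat \<Rightarrow> nat set \<Rightarrow> nat set" where
  "icg_set n D = (\<Union>d\<in>D. G n d)"

definition lam :: "nat \<Rightarrow> nat set \<Rightarrow> nat \<Rightarrow> complex" where
  "lam n S k = (\<Sum>g\<in>S. exp (2 * of_real pi * \<i> * of_nat k * of_nat g / of_nat n))"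

text \<open>Adjacency spectrum (with multiplicity) of Cay(Z_n, S): lambda_1(S),...,lambda_n(S).\<close>
definition cay_spectrum :: "nat \<Rightarrow> nat set \<Rightarrow> complex multiset" where
  "cay_spectrum n S = image_mset (lam n S) (mset_set {1..n})"

definition isospectral :: "nat \<Rightarrow> nat set \<Rightarrow> nat set \<Rightarrow> bool" where
  "isospectral n S1 S2 \<longleftrightarrow> cay_spectrum n S1 = cay_spectrum n S2"

end

theory Submission
  imports Defs
begin

text \<open>
  For a connection set that is a union of gcd classes, \<open>\<lambda>\<^sub>k\<close> depends only on \<open>gcd k n\<close>:
  if \<open>gcd k n = d\<close> then \<open>k \<equiv> d u (mod n)\<close> for a unit \<open>u\<close>, and multiplication by \<open>u\<close> permutes
  every gcd class. Hence, with \<open>v = \<lambda>\<^sub>d\<^sub>0(S\<^sub>1)\<close>, every position \<open>k\<close> with \<open>gcd k n \<in> \<D>\<^sub>T\<close> (the set \<open>T\<close>)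
  carries the eigenvalue \<open>v\<close> of \<open>S\<^sub>1\<close>, and on the positions with \<open>gcd k n \<in> \<D>\<^sub>R\<close> (the set \<open>R\<close>) the
  eigenvalues of \<open>S\<^sub>1\<close> and \<open>S\<^sub>2\<close> agree. If no \<open>\<lambda>\<^sub>d(S\<^sub>2)\<close> with \<open>d \<in> \<D>\<^sub>T\<close> equalled \<open>v\<close>, then \<open>S\<^sub>2\<close>
  could take the value \<open>v\<close> only where \<open>S\<^sub>1\<close> does inside \<open>R\<close> and at the \<open>n - |R| - |T|\<close> positions
  outside \<open>R \<union> T\<close>, so isospectrality forces \<open>|T| \<le> n - |R| - |T|\<close>; and \<open>|R|\<close>, \<open>|T|\<close> are sums
  of totients.
\<close>

lemma exists_coprime_cong_mod_divisor:
  fixes a m n :: nat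
  assumes "n > 0" "m dvd n" "coprime a m"
  shows "\<exists>u. coprime u n \<and> [u = a] (mod m)"
proof -
  \<comment> \<open>Add to \<open>a\<close> a multiple of \<open>m\<close> divisible by exactly the primes of \<open>n\<close> missing from \<open>a\<close>.\<close>
  define P where "P = {p::nat. prime p \<and> p dvd n \<and> \<not> p dvd a}"
  have "finite P"
    by (rule finite_subset[of _ "{..n}"]) (use assms(1) in \<open>auto simp: P_def dest: dvd_imp_le\<close>)
  define t where "t = \<Prod>P"
  have P_dvd_t: "p dvd t" if "p \<in> P" for p
    unfolding t_def using \<open>finite P\<close> that by (rule dvd_prodI)
  have prime_dvd_t: "p \<in> P" if "prime p" "p dvd t" for p
  proof -
    from that \<open>finite P\<close> obtain q where "q \<in> P" "p dvd q"
      unfolding t_def by (auto simp: prime_dvd_prod_iff)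
    moreover from this that(1) have "p = q" by (auto simp: P_def intro: primes_dvd_imp_eq)
    ultimately show ?thesis by simp
  qed
  define u where "u = a + m * t"
  have "coprime u n"
  proof (rule ccontr)
    assume "\<not> coprime u n"
    then obtain p where p: "prime p" "p dvd u" "p dvd n"
      using prime_factor_nat[of "gcd u n"] coprime_iff_gcd_eq_1 by (metis dvd_trans gcd_dvd1 gcd_dvd2)
    show False
    proof (cases "p dvd a")
      case True
      then have "\<not> p dvd m"
        using assms(3) p(1) coprime_common_divisor not_prime_unit by blast
      moreover have "\<not> p dvd t" using prime_dvd_t[OF p(1)] True by (auto simp: P_def)
      moreover have "p dvd m * t" using p(2) True by (simp add: u_def dvd_add_right_iff)
      ultimately show False by (simp add: prime_dvd_mult_iff[OF p(1)])
    next
      case False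
      with p have "p dvd m * t" using P_dvd_t by (simp add: P_def)
      with p(2) have "p dvd a" by (simp add: u_def dvd_add_left_iff)
      with False show False ..
    qed
  qed
  moreover have "[u = a] (mod m)" by (simp add: u_def cong_def)
  ultimately show ?thesis by blast
qed

definition unit_root :: "nat \<Rightarrow> nat \<Rightarrow> complex" where
  "unit_root n x = exp (2 * of_real pi * \<i> * of_nat x / of_nat n)"

lemma lam_eq_sum_unit_root: "lam n S k = (\<Sum>g\<in>S. unit_root n (k * g))"
  unfolding lam_def unit_root_def by (simp add: mult.assoc)

lemma unit_root_mod:
  assumes "n > 0"
  shows "unit_root n x = unit_root n (x mod n)"
proof -
  have "(of_nat x :: complex) = of_nat (x mod n) + of_nat n * of_nat (x div n)"
    by (metis mod_mult_div_eq add.commute of_nat_add of_nat_mult)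
  then have "2 * of_real pi * \<i> * of_nat x / of_nat n =
      2 * of_real pi * \<i> * of_nat (x mod n) / of_nat n + of_nat (x div n) * (2 * of_real pi * \<i>)"
    using assms by (simp add: field_simps)
  then have "unit_root n x = unit_root n (x mod n) * exp (2 * of_real pi * \<i>) ^ (x div n)"
    unfolding unit_root_def by (simp add: exp_add exp_of_nat_mult)
  then show ?thesis by simp
qed

lemma unit_root_cong:
  assumes "n > 0" "[x = y] (mod n)"
  shows "unit_root n x = unit_root n y"
  using assms unit_root_mod[of n x] unit_root_mod[of n y] by (simp add: cong_def)

lemma cong_atLeastAtMost_imp_eq:
  fixes a b n :: nat
  assumes "a \<in> {1..n}" "b \<in> {1..n}" "[a = b] (mod n)"
  shows "a = b"
proof -
  have "a mod n = b mod n" using assms(3) by (simp add: cong_def)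
  moreover have "x mod n = (if x = n then 0 else x)" if "x \<in> {1..n}" for x
    using that by auto
  ultimately show ?thesis using assms(1,2) by (auto split: if_splits)
qed

lemma icg_set_eq: "icg_set n D = {g\<in>{1..n}. gcd g n \<in> D}"
  unfolding icg_set_def G_def by auto

lemma sum_icg_set_mult_coprime:
  fixes n u c :: nat
  assumes n: "n > 0" and u: "coprime u n"
  shows "(\<Sum>g\<in>icg_set n D. unit_root n (c * (u * g))) = (\<Sum>g\<in>icg_set n D. unit_root n (c * g))"
proof -
  define S where "S = icg_set n D"
  define r where "r g = (if u * g mod n = 0 then n else u * g mod n)" for g
  have r_cong: "[r g = u * g] (mod n)" for g
    by (auto simp: r_def cong_def)
  have "gcd (r g) n = gcd g n" for g
    using cong_gcd_eq[OF r_cong] u by (simp add: gcd_mult_left_left_cancel coprime_commute)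
  moreover have "r g \<in> {1..n}" for g
    using n by (auto simp: r_def less_imp_le)
  ultimately have "r ` S \<subseteq> S"
    by (auto simp: S_def icg_set_eq)
  moreover have "inj_on r S"
  proof (rule inj_onI)
    fix x y assume "x \<in> S" "y \<in> S" "r x = r y"
    then have "[u * x = u * y] (mod n)"
      using r_cong[of x] r_cong[of y] by (metis cong_sym cong_trans)
    then have "[x = y] (mod n)" using cong_mult_lcancel_nat[OF u] by simp
    with \<open>x \<in> S\<close> \<open>y \<in> S\<close> show "x = y"
      using cong_atLeastAtMost_imp_eq by (auto simp: S_def icg_set_eq)
  qed
  ultimately have "bij_betw r S S"
    using endo_inj_surj[of S r] by (simp add: S_def icg_set_eq bij_betw_def)
  have "(\<Sum>g\<in>S. unit_root n (c * (u * g))) = (\<Sum>g\<in>S. unit_root n (c * r g))"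
    using unit_root_cong[OF n] cong_scalar_left[OF r_cong, of c] cong_sym by (intro sum.cong) blast+
  also have "\<dots> = (\<Sum>g\<in>S. unit_root n (c * g))"
    using sum.reindex_bij_betw[OF \<open>bij_betw r S S\<close>, of "\<lambda>h. unit_root n (c * h)"] by simp
  finally show ?thesis by (simp add: S_def)
qed

lemma lam_icg_set_gcd:
  assumes n: "n > 0"
  shows "lam n (icg_set n D) k = lam n (icg_set n D) (gcd k n)"
proof -
  define d where "d = gcd k n"
  have "d > 0" using n by (simp add: d_def)
  have k: "k = d * (k div d)" and nd: "n = d * (n div d)" by (simp_all add: d_def)
  have "coprime (k div d) (n div d)"
    unfolding d_def using div_gcd_coprime n by blast
  then obtain u where u: "coprime u n" "[u = k div d] (mod n div d)"
    using exists_coprime_cong_mod_divisor[OF n] nd by (metis dvd_triv_right)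
  have "[d * u = d * (k div d)] (mod d * (n div d))"
    using cong_cmult_leftI[OF u(2)] .
  then have k_cong: "[k * g = d * (u * g)] (mod n)" for g
    using cong_scalar_right[of "d * u" k n g] k nd by (metis cong_sym mult.assoc)
  have "lam n (icg_set n D) k = (\<Sum>g\<in>icg_set n D. unit_root n (d * (u * g)))"
    unfolding lam_eq_sum_unit_root using unit_root_cong[OF n k_cong] by simp
  also have "\<dots> = lam n (icg_set n D) d"
    unfolding lam_eq_sum_unit_root by (rule sum_icg_set_mult_coprime[OF n u(1)])
  finally show ?thesis by (simp add: d_def)
qed

lemma count_cay_spectrum: "count (cay_spectrum n S) v = card {k\<in>{1..n}. lam n S k = v}"
proof -
  have "count (cay_spectrum n S) v =
      (\<Sum>x | x \<in># mset_set {1..n} \<and> v = lam n S x. count (mset_set {1..n}) x)"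
    unfolding cay_spectrum_def by (rule count_image_mset')
  also have "\<dots> = (\<Sum>x\<in>{k\<in>{1..n}. lam n S k = v}. 1)"
    by (rule sum.cong) auto
  finally show ?thesis by simp
qed

lemma card_gcd_mem_eq_sum_totient:
  assumes n: "n > 0" and E: "E \<subseteq> divisors_of n"
  shows "card {k\<in>{1..n}. gcd k n \<in> E} = (\<Sum>d\<in>E. totient (n div d))"
proof -
  have "finite E"
    by (rule finite_subset[OF E], rule finite_subset[of _ "{..n}"])
       (use n in \<open>auto simp: divisors_of_def dest: dvd_imp_le\<close>)
  have "{k\<in>{1..n}. gcd k n \<in> E} = (\<Union>d\<in>E. {k\<in>{0<..n}. gcd k n = d})" by auto
  also have "card \<dots> = (\<Sum>d\<in>E. card {k\<in>{0<..n}. gcd k n = d})"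
    using \<open>finite E\<close> by (intro card_UN_disjoint) auto
  also have "\<dots> = (\<Sum>d\<in>E. totient (n div d))"
    using E card_gcd_eq_totient[OF n] by (intro sum.cong) (auto simp: divisors_of_def)
  finally show ?thesis .
qed

lemma card_level_sets_bound:
  assumes K: "finite K" "R \<subseteq> K" "T \<subseteq> K" "R \<inter> T = {}"
    and same: "card {k\<in>K. f k = v} = card {k\<in>K. g k = v}"
    and agree: "\<And>k. k \<in> R \<Longrightarrow> f k = g k"
    and hit: "\<And>k. k \<in> T \<Longrightarrow> f k = v"
    and miss: "\<And>k. k \<in> T \<Longrightarrow> g k \<noteq> v"
  shows "card R + 2 * card T \<le> card K"
proof -
  define Q where "Q = {k\<in>R. f k = v}"
  have fin: "finite Q" "finite T" "finite (K - (R \<union> T))"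
    using K by (auto simp: Q_def intro: finite_subset)
  have "card Q + card T = card (Q \<union> T)"
    using fin K(4) by (intro card_Un_disjoint[symmetric]) (auto simp: Q_def)
  also have "\<dots> \<le> card {k\<in>K. f k = v}"
    using K hit by (intro card_mono) (auto simp: Q_def)
  finally have f_level: "card Q + card T \<le> card {k\<in>K. f k = v}" .
  have "card {k\<in>K. g k = v} \<le> card (Q \<union> (K - (R \<union> T)))"
    using fin agree miss by (intro card_mono) (auto simp: Q_def)
  also have "\<dots> \<le> card Q + card (K - (R \<union> T))" by (rule card_Un_le)
  also have "card (K - (R \<union> T)) = card K - card (R \<union> T)"
    using K by (intro card_Diff_subset) (auto intro: finite_subset)
  also have "card (R \<union> T) = card R + card T"
    using K by (intro card_Un_disjoint) (auto intro: finite_subset)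
  finally have g_level: "card {k\<in>K. g k = v} \<le> card Q + (card K - (card R + card T))" .
  have "finite R" "finite T" using K by (auto intro: finite_subset)
  then have "card R + card T \<le> card K"
    using K card_mono[OF K(1), of "R \<union> T"] card_Un_disjoint[of R T] by auto
  with f_level g_level same show ?thesis by linarith
qed

theorem lemma3p16:
  fixes n d0 :: nat and D1 D2 DR DT :: "nat set"
  assumes "n \<ge> 1"
    and "D1 \<subseteq> divisors_of n - {n}" and "D2 \<subseteq> divisors_of n - {n}"
    and "isospectral n (icg_set n D1) (icg_set n D2)"
    and "DR \<subseteq> divisors_of n"
    and "\<forall>d\<in>DR. lam n (icg_set n D1) d = lam n (icg_set n D2) d"
    and "DT \<subseteq> divisors_of n - DR"
    and "d0 \<in> DT"
    and "\<forall>d\<in>DT. lam n (icg_set n D1) d = lam n (icg_set n D1) d0"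
    and "(\<Sum>d\<in>DT. int (totient (n div d))) >
           int n - (\<Sum>d\<in>DR. int (totient (n div d))) - (\<Sum>d\<in>DT. int (totient (n div d)))"
  shows "(\<exists>d0'\<in>DT. lam n (icg_set n D2) d0' = lam n (icg_set n D1) d0)
         \<and> (DT = {d0} \<longrightarrow> lam n (icg_set n D1) d0 = lam n (icg_set n D2) d0)"
proof -
  have n: "n > 0" using assms(1) by simp
  let ?L1 = "lam n (icg_set n D1)" and ?L2 = "lam n (icg_set n D2)"
  have "\<exists>d\<in>DT. ?L2 d = ?L1 d0"
  proof (rule ccontr)
    assume none: "\<not> (\<exists>d\<in>DT. ?L2 d = ?L1 d0)"
    let ?R = "{k\<in>{1..n}. gcd k n \<in> DR}" and ?T = "{k\<in>{1..n}. gcd k n \<in> DT}"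
    have "card ?R + 2 * card ?T \<le> card {1..n}"
    proof (rule card_level_sets_bound[where f = ?L1 and g = ?L2 and v = "?L1 d0"])
      show "card {k\<in>{1..n}. ?L1 k = ?L1 d0} = card {k\<in>{1..n}. ?L2 k = ?L1 d0}"
        using assms(4) count_cay_spectrum[of n "icg_set n D1"] count_cay_spectrum[of n "icg_set n D2"]
        by (simp add: isospectral_def)
    qed (use assms(6,7,9) none lam_icg_set_gcd[OF n] in \<open>auto\<close>)
    moreover have "card ?R = (\<Sum>d\<in>DR. totient (n div d))" "card ?T = (\<Sum>d\<in>DT. totient (n div d))"
      using assms(5,7) card_gcd_mem_eq_sum_totient[OF n] by blast+
    ultimately show False
      using assms(10) by (simp flip: of_nat_sum)
  qed
  then show ?thesis by auto
qed

end
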